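(* For $n\geqslant1$, $m,f\geqslant0$ let $\mathfrak{l}_{n,m,f}$ be the number of inversion sequences $\sigma$ of length $n$ avoiding both $010$ and $110$, with maximum value $m$ and $\mathrm{forb}(\sigma,\{010,110\})=f$. Then for all $n\geqslant1$, $m\geqslant1$, $f\geqslant0$, $$\mathfrak{l}_{n,m,f}=\sum_{p=m+1}^{n}\sum_{i=0}^{f-1}\sum_{j=0}^{m-1}\mathfrak{l}_{p-1,j,i}\cdot\Bigl(\mathfrak{j}_{n-p,\,m-i,\,f-i-1}+\delta_{f,m+1}\sum_{\ell=0}^{n-p-1}\mathfrak{k}_{\ell,\,m-i}\Bigr),$$ where $\mathfrak{j}_{a,b,c}$ is the number of words of length $a$ over $\{0,\dots,b-1\}$ avoiding $010$ and $110$ with $\mathrm{forb}=c$ (the empty word having $\mathrm{forb}=0$), and $\mathfrak{k}_{a,b}$ is the number of words of length $a$ over $\{0,\dots,b-1\}$ avoiding $010$ and $110$.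
   Context: $\delta_{a,b}$ is the Kronecker delta. An inversion sequence of length $n$ is a sequence $(\sigma_1,\dots,\sigma_n)$ of integers with $0\leqslant\sigma_i<i$. A sequence contains a pattern $p$ if some subsequence is order-isomorphic to $p$; otherwise it avoids $p$. Avoiding $010$: no $i<j<l$ with $\sigma_i=\sigma_l<\sigma_j$. Avoiding $110$: no $i<j<l$ with $\sigma_i=\sigma_j>\sigma_l$. For a nonempty sequence $\sigma$ avoiding a set of patterns $P$, a value $v\in\{0,\dots,\max(\sigma)\}$ is forbidden if $\sigma$ followed by $M$ and then $v$ contains some pattern of $P$, where $M>\max(\sigma)$; $\mathrm{forb}(\sigma,P)$ is the number of forbidden values. *)

theory Defs
  imports Main
begin

definition contains_010 :: "nat list \<Rightarrow> bool" where
  "contains_010 s \<longleftrightarrow> (\<exists>i j l. i < j \<and> j < l \<and> l < length s \<and>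
      s ! i = s ! l \<and> s ! l < s ! j)"

definition contains_110 :: "nat list \<Rightarrow> bool" where
  "contains_110 s \<longleftrightarrow> (\<exists>i j l. i < j \<and> j < l \<and> l < length s \<and>
      s ! i = s ! j \<and> s ! l < s ! j)"

definition avoids_010_110 :: "nat list \<Rightarrow> bool" where
  "avoids_010_110 s \<longleftrightarrow> \<not> contains_010 s \<and> \<not> contains_110 s"

text \<open>forb(s,{010,110}): number of v in {0..max s} such that s, M, v contains 010 or 110,
  where M = max s + 1 > max s. For the empty sequence it is 0 by convention.\<close>
definition forb :: "nat list \<Rightarrow> nat" where
  "forb s = (if s = [] then 0 else
     card {v \<in> {0..Max (set s)}. \<not> avoids_010_110 (s @ [Suc (Max (set s)), v])})"

definition is_inv_seq :: "nat \<Rightarrow> nat list \<Rightarrow> bool" where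
  "is_inv_seq n s \<longleftrightarrow> length s = n \<and> (\<forall>i < n. s ! i < i + 1)"

definition lcount :: "nat \<Rightarrow> nat \<Rightarrow> nat \<Rightarrow> nat" where
  "lcount n m f = card {s. is_inv_seq n s \<and> avoids_010_110 s \<and> s \<noteq> [] \<and>
      Max (set s) = m \<and> forb s = f}"

definition jcount :: "nat \<Rightarrow> nat \<Rightarrow> nat \<Rightarrow> nat" where
  "jcount a b c = card {w. length w = a \<and> set w \<subseteq> {0..<b} \<and> avoids_010_110 w \<and> forb w = c}"

definition kcount :: "nat \<Rightarrow> nat \<Rightarrow> nat" where
  "kcount a b = card {w. length w = a \<and> set w \<subseteq> {0..<b} \<and> avoids_010_110 w}"

end

theory Submission
  imports Defs "HOL-Library.Infinite_Set"
begin

text \<open>Split \<open>\<sigma>\<close> at the first occurrence of its maximum, \<open>\<sigma> = \<alpha> m \<beta>\<close>; the prefix \<open>\<alpha>\<close> is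
  counted by \<open>l_{p-1,j,i}\<close>. For an avoiding sequence the forbidden values are the values occurring
  in it together with the values below a repeated one. If \<open>m \<notin> \<beta>\<close>, then \<open>\<beta>\<close> is an avoiding word
  over the \<open>m - i\<close> values below \<open>m\<close> not forbidden by \<open>\<alpha>\<close>, and the forbidden values of \<open>\<sigma>\<close> are
  those of \<open>\<alpha>\<close>, \<open>m\<close>, and those of \<open>\<beta>\<close>; an order-preserving relabelling of the alphabet
  gives \<open>j_{n-p,m-i,f-i-1}\<close>. If \<open>m \<in> \<beta>\<close>, the pattern 110 forces \<open>\<beta>\<close> to be a word \<open>\<gamma>\<close> over
  the same alphabet followed by \<open>m m \<dots> m\<close>, and then all of \<open>0, \<dots>, m\<close> is forbidden, so
  \<open>f = m + 1\<close>; the choices of \<open>\<gamma>\<close> give \<open>\<Sum>\<^sub>\<ell> k_{\<ell>,m-i}\<close>.\<close>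

lemma append_Cons_eq_append_Cons_first:
  assumes "x \<notin> set xs" "x \<notin> set ys" "xs @ x # zs = ys @ x # zs'"
  shows "xs = ys \<and> zs = zs'"
  using assms by (induction xs arbitrary: ys) (auto simp: Cons_eq_append_conv)

lemma sum_group_by_pair:
  fixes \<phi> \<psi> :: "'a \<Rightarrow> nat" and h :: "nat \<Rightarrow> nat \<Rightarrow> 'b::semiring_1"
  assumes P: "finite P" and bounds: "\<And>a. a \<in> P \<Longrightarrow> \<phi> a < f \<and> \<psi> a < m"
  shows "(\<Sum>a\<in>P. h (\<phi> a) (\<psi> a)) = (\<Sum>i<f. \<Sum>j<m. of_nat (card {a\<in>P. \<phi> a = i \<and> \<psi> a = j}) * h i j)"
proof -
  let ?A = "\<lambda>y. {a\<in>P. (\<phi> a, \<psi> a) = y}"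
  have "(\<Sum>a\<in>P. h (\<phi> a) (\<psi> a)) = (\<Sum>y\<in>{..<f} \<times> {..<m}. \<Sum>a\<in>?A y. h (\<phi> a) (\<psi> a))"
    by (rule sum.group[symmetric]) (use P bounds in auto)
  also have "\<dots> = (\<Sum>y\<in>{..<f} \<times> {..<m}. of_nat (card (?A y)) * h (fst y) (snd y))"
  proof (rule sum.cong[OF refl])
    fix y
    have "(\<Sum>a\<in>?A y. h (\<phi> a) (\<psi> a)) = (\<Sum>a\<in>?A y. h (fst y) (snd y))" by (rule sum.cong) auto
    then show "(\<Sum>a\<in>?A y. h (\<phi> a) (\<psi> a)) = of_nat (card (?A y)) * h (fst y) (snd y)" by simp
  qed
  finally show ?thesis by (simp add: sum.cartesian_product split_def prod_eq_iff)
qed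

lemma finite_is_inv_seq: "finite {s. is_inv_seq n s}"
proof (rule finite_subset[OF _ finite_lists_length_eq[of "{..<n}" n]])
  show "{s. is_inv_seq n s} \<subseteq> {s. set s \<subseteq> {..<n} \<and> length s = n}"
    unfolding is_inv_seq_def by (fastforce simp: in_set_conv_nth less_Suc_eq_le)
qed simp

definition below_repeated :: "nat list \<Rightarrow> nat set" where
  "below_repeated s = {v. \<exists>i j. i < j \<and> j < length s \<and> s ! i = s ! j \<and> v < s ! i}"

definition forbidden_values :: "nat list \<Rightarrow> nat set" where
  "forbidden_values s = set s \<union> below_repeated s"

lemma avoids_010_110I:
  assumes "\<And>i j l. i < j \<Longrightarrow> j < l \<Longrightarrow> l < length s \<Longrightarrow> s ! l < s ! j \<Longrightarrow>
      s ! i \<noteq> s ! l \<and> s ! i \<noteq> s ! j"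
  shows "avoids_010_110 s"
  using assms unfolding avoids_010_110_def contains_010_def contains_110_def by fastforce

lemma avoids_010_110D_010:
  "avoids_010_110 s \<Longrightarrow> i < j \<Longrightarrow> j < l \<Longrightarrow> l < length s \<Longrightarrow> s ! i = s ! l \<Longrightarrow> s ! l < s ! j \<Longrightarrow> False"
  unfolding avoids_010_110_def contains_010_def by blast

lemma avoids_010_110D_110:
  "avoids_010_110 s \<Longrightarrow> i < j \<Longrightarrow> j < l \<Longrightarrow> l < length s \<Longrightarrow> s ! i = s ! j \<Longrightarrow> s ! l < s ! j \<Longrightarrow> False"
  unfolding avoids_010_110_def contains_110_def by blast

lemma avoids_010_110_appendD1: "avoids_010_110 (x @ y) \<Longrightarrow> avoids_010_110 x"
proof (rule avoids_010_110I)
  fix i j l assume a: "avoids_010_110 (x @ y)" "i < j" "j < l" "l < length x" "x ! l < x ! j"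
  show "x ! i \<noteq> x ! l \<and> x ! i \<noteq> x ! j"
    using avoids_010_110D_010[OF a(1), of i j l] avoids_010_110D_110[OF a(1), of i j l] a(2-5)
    by (auto simp: nth_append)
qed

lemma avoids_010_110_appendD2: "avoids_010_110 (x @ y) \<Longrightarrow> avoids_010_110 y"
proof (rule avoids_010_110I)
  fix i j l assume a: "avoids_010_110 (x @ y)" "i < j" "j < l" "l < length y" "y ! l < y ! j"
  let ?i = "length x + i" and ?j = "length x + j" and ?l = "length x + l"
  show "y ! i \<noteq> y ! l \<and> y ! i \<noteq> y ! j"
    using avoids_010_110D_010[OF a(1), of ?i ?j ?l] avoids_010_110D_110[OF a(1), of ?i ?j ?l] a(2-5)
    by (auto simp: nth_append)
qed

lemma avoids_010_110_singleton: "avoids_010_110 [x]"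
  by (rule avoids_010_110I) auto

lemma avoids_010_110_append_disjointI:
  assumes disj: "set x \<inter> set y = {}"
    and x: "avoids_010_110 x" and y: "avoids_010_110 y" and xy: "set y \<inter> below_repeated x = {}"
  shows "avoids_010_110 (x @ y)"
proof (rule avoids_010_110I)
  let ?s = "x @ y"
  fix i j l assume b: "i < j" "j < l" "l < length ?s" "?s ! l < ?s ! j"
  consider "l < length x" | "length x \<le> i" | "i < length x" "length x \<le> l" by linarith
  then show "?s ! i \<noteq> ?s ! l \<and> ?s ! i \<noteq> ?s ! j"
  proof cases
    case 1
    then show ?thesis
      using b x avoids_010_110D_010[of x i j l] avoids_010_110D_110[of x i j l] by (auto simp: nth_append)
  next
    case 2
    let ?i = "i - length x" and ?j = "j - length x" and ?l = "l - length x"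
    have "?i < ?j" "?j < ?l" "?l < length y" using b 2 by auto
    then show ?thesis
      using 2 b y avoids_010_110D_010[of y ?i ?j ?l] avoids_010_110D_110[of y ?i ?j ?l]
      by (auto simp: nth_append)
  next
    case 3
    have yl: "?s ! l \<in> set y" and xi: "?s ! i \<in> set x" using 3 b by (auto simp: nth_append)
    have "?s ! i \<noteq> ?s ! j"
    proof
      assume e: "?s ! i = ?s ! j"
      show False
      proof (cases "j < length x")
        case True
        then have "i < j" "j < length x" "x ! i = x ! j" "?s ! l < x ! i"
          using b e 3 by (auto simp: nth_append)
        then have "?s ! l \<in> below_repeated x" unfolding below_repeated_def by blast
        then show False using yl xy by auto
      next
        case False
        then have "?s ! j \<in> set y" using b by (auto simp: nth_append)
        then show False using e xi disj by auto
      qed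
    qed
    then show ?thesis using yl xi disj by auto
  qed
qed

lemma avoids_010_110_append_disjoint:
  assumes disj: "set x \<inter> set y = {}"
  shows "avoids_010_110 (x @ y) \<longleftrightarrow>
    avoids_010_110 x \<and> avoids_010_110 y \<and> set y \<inter> below_repeated x = {}"
proof (intro iffI)
  assume a: "avoids_010_110 (x @ y)"
  have "v \<notin> below_repeated x" if "v \<in> set y" for v
  proof
    assume "v \<in> below_repeated x"
    then obtain i j where "i < j" "j < length x" "x ! i = x ! j" "v < x ! i"
      unfolding below_repeated_def by blast
    moreover obtain l where "l < length y" "y ! l = v" using \<open>v \<in> set y\<close> by (auto simp: in_set_conv_nth)
    ultimately show False
      using avoids_010_110D_110[OF a, of i j "length x + l"] by (auto simp: nth_append)
  qed
  then show "avoids_010_110 x \<and> avoids_010_110 y \<and> set y \<inter> below_repeated x = {}"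
    using avoids_010_110_appendD1[OF a] avoids_010_110_appendD2[OF a] by blast
qed (use avoids_010_110_append_disjointI[OF disj] in blast)

lemma below_repeated_singleton: "below_repeated [x] = {}"
  unfolding below_repeated_def by auto

lemma below_repeated_append_disjoint:
  assumes disj: "set x \<inter> set y = {}"
  shows "below_repeated (x @ y) = below_repeated x \<union> below_repeated y"
proof (intro equalityI subsetI)
  fix v assume "v \<in> below_repeated (x @ y)"
  then obtain i j where ij: "i < j" "j < length (x @ y)" "(x @ y) ! i = (x @ y) ! j" "v < (x @ y) ! i"
    unfolding below_repeated_def by blast
  consider "j < length x" | "length x \<le> i" | "i < length x" "length x \<le> j" by linarith
  then show "v \<in> below_repeated x \<union> below_repeated y"
  proof cases
    case 1
    then have "i < j" "j < length x" "x ! i = x ! j" "v < x ! i" using ij by (auto simp: nth_append)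
    then have "v \<in> below_repeated x" unfolding below_repeated_def by blast
    then show ?thesis ..
  next
    case 2
    then have "i - length x < j - length x" "j - length x < length y"
      "y ! (i - length x) = y ! (j - length x)" "v < y ! (i - length x)"
      using ij by (auto simp: nth_append)
    then have "v \<in> below_repeated y" unfolding below_repeated_def by blast
    then show ?thesis ..
  next
    case 3
    then have "(x @ y) ! i \<in> set x" "(x @ y) ! j \<in> set y" using ij(2) by (auto simp: nth_append)
    then show ?thesis using ij disj by auto
  qed
next
  fix v assume "v \<in> below_repeated x \<union> below_repeated y"
  then show "v \<in> below_repeated (x @ y)"
  proof
    assume "v \<in> below_repeated x"
    then obtain i j where "i < j" "j < length x" "x ! i = x ! j" "v < x ! i"
      unfolding below_repeated_def by blast
    then show ?thesis unfolding below_repeated_def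
      by (intro CollectI exI[of _ i] exI[of _ j]) (auto simp: nth_append)
  next
    assume "v \<in> below_repeated y"
    then obtain i j where "i < j" "j < length y" "y ! i = y ! j" "v < y ! i"
      unfolding below_repeated_def by blast
    then show ?thesis unfolding below_repeated_def
      by (intro CollectI exI[of _ "length x + i"] exI[of _ "length x + j"]) (auto simp: nth_append)
  qed
qed

lemma below_repeated_subset_lessThan: "\<forall>v\<in>set s. v < k \<Longrightarrow> below_repeated s \<subseteq> {..<k}"
  unfolding below_repeated_def by auto (meson nth_mem order.strict_trans)

lemma forbidden_values_subset_lessThan: "set s \<subseteq> {..<k} \<Longrightarrow> forbidden_values s \<subseteq> {..<k}"
  using below_repeated_subset_lessThan[of s k] unfolding forbidden_values_def by auto

lemma forbidden_values_subset_atMost_Max: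
  assumes "s \<noteq> []"
  shows "forbidden_values s \<subseteq> {..Max (set s)}"
proof -
  have "set s \<subseteq> {..<Suc (Max (set s))}" by (auto simp: less_Suc_eq_le)
  from forbidden_values_subset_lessThan[OF this] show ?thesis by (auto simp: less_Suc_eq_le)
qed

lemma forbidden_values_append_mono: "forbidden_values x \<subseteq> forbidden_values (x @ y)"
  unfolding forbidden_values_def below_repeated_def
  by (auto 0 4 simp: nth_append intro: exI[where P = "\<lambda>j. _ < j \<and> _"])

text \<open>Behind a new maximum \<open>Suc M\<close>, a value \<open>v\<close> completes a 010 iff it occurs in \<open>s\<close>, and a 110
  iff it lies below a value repeated in \<open>s\<close>.\<close>

lemma forbidden_values_if_not_avoids_010_110_append_max:
  assumes a: "avoids_010_110 s" and le: "\<forall>x\<in>set s. x \<le> M"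
    and na: "\<not> avoids_010_110 (s @ [Suc M, v])"
  shows "v \<in> forbidden_values s"
proof -
  let ?t = "s @ [Suc M, v]"
  obtain i j l where ijl: "i < j" "j < l" "l < length ?t" "?t ! l < ?t ! j"
    and eq: "?t ! i = ?t ! l \<or> ?t ! i = ?t ! j"
    using na avoids_010_110I by blast
  have le': "k < length s \<Longrightarrow> s ! k \<le> M" for k using le by simp
  consider "l < length s" | "l = length s" | "l = Suc (length s)" using ijl(3) by fastforce
  then show ?thesis
  proof cases
    case 1
    then show ?thesis using ijl eq avoids_010_110D_010[OF a, of i j l] avoids_010_110D_110[OF a, of i j l]
      by (auto simp: nth_append)
  next
    case 2
    then show ?thesis using ijl le'[of j] by (auto simp: nth_append)
  next
    case 3
    then have "i < length s" using ijl by auto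
    consider "?t ! i = v" | "j < length s" "s ! i = s ! j" "v < s ! i"
      using eq ijl 3 \<open>i < length s\<close> le'[of i] by (cases "j < length s") (auto simp: nth_append)
    then show ?thesis
    proof cases
      case 1
      then show ?thesis using \<open>i < length s\<close> unfolding forbidden_values_def by (auto simp: nth_append)
    next
      case 2
      then have "v \<in> below_repeated s" using ijl unfolding below_repeated_def by blast
      then show ?thesis unfolding forbidden_values_def by blast
    qed
  qed
qed

lemma not_avoids_010_110_append_max_if_forbidden:
  assumes le: "\<forall>x\<in>set s. x \<le> M" and v: "v \<in> forbidden_values s"
  shows "\<not> avoids_010_110 (s @ [Suc M, v])"
proof
  assume a: "avoids_010_110 (s @ [Suc M, v])"
  show False
  proof (cases "v \<in> set s")
    case True
    then obtain i where "i < length s" "s ! i = v" by (auto simp: in_set_conv_nth)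
    then show False using avoids_010_110D_010[OF a, of i "length s" "Suc (length s)"] le True
      by (auto simp: nth_append)
  next
    case False
    then obtain i j where "i < j" "j < length s" "s ! i = s ! j" "v < s ! i"
      using v unfolding forbidden_values_def below_repeated_def by blast
    then show False using avoids_010_110D_110[OF a, of i j "Suc (length s)"] by (auto simp: nth_append)
  qed
qed

lemma forb_eq_card_forbidden_values:
  assumes a: "avoids_010_110 s"
  shows "forb s = card (forbidden_values s)"
proof (cases "s = []")
  case True then show ?thesis by (simp add: forb_def forbidden_values_def below_repeated_def)
next
  case False
  define M where "M = Max (set s)"
  have le: "\<forall>x\<in>set s. x \<le> M" unfolding M_def by simp
  have "{v \<in> {0..M}. \<not> avoids_010_110 (s @ [Suc M, v])} = forbidden_values s"
    using forbidden_values_if_not_avoids_010_110_append_max[OF a le]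
      not_avoids_010_110_append_max_if_forbidden[OF le]
      forbidden_values_subset_atMost_Max[OF False]
    unfolding M_def by auto
  then show ?thesis unfolding forb_def M_def using False by simp
qed

lemma avoids_010_110_map_strict_mono:
  assumes mono: "strict_mono_on S \<phi>" and w: "set w \<subseteq> S"
  shows "avoids_010_110 (map \<phi> w) \<longleftrightarrow> avoids_010_110 w"
proof -
  have inS: "k < length w \<Longrightarrow> w ! k \<in> S" for k using w nth_mem by blast
  have "contains_010 (map \<phi> w) \<longleftrightarrow> contains_010 w" "contains_110 (map \<phi> w) \<longleftrightarrow> contains_110 w"
    unfolding contains_010_def contains_110_def
    using strict_mono_on_less[OF mono] strict_mono_on_eq[OF mono] inS
    by (auto 0 4)
  then show ?thesis unfolding avoids_010_110_def by simp
qed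

lemma forbidden_values_map_strict_mono:
  assumes mono: "strict_mono_on S \<phi>" and w: "set w \<subseteq> S" and below: "below_repeated w \<subseteq> S"
  shows "forbidden_values (map \<phi> w) \<inter> \<phi> ` S = \<phi> ` forbidden_values w"
proof -
  have inS: "k < length w \<Longrightarrow> w ! k \<in> S" for k using w nth_mem by blast
  have "below_repeated (map \<phi> w) \<inter> \<phi> ` S = \<phi> ` below_repeated w"
  proof (intro set_eqI iffI)
    fix u assume "u \<in> below_repeated (map \<phi> w) \<inter> \<phi> ` S"
    then obtain i j t where ij: "i < j" "j < length w" "\<phi> (w ! i) = \<phi> (w ! j)" "\<phi> t < \<phi> (w ! i)"
      and t: "t \<in> S" "u = \<phi> t"
      unfolding below_repeated_def by auto
    then have "w ! i = w ! j" "t < w ! i"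
      using strict_mono_on_eq[OF mono] strict_mono_on_less[OF mono] inS by auto
    with ij t show "u \<in> \<phi> ` below_repeated w" unfolding below_repeated_def by blast
  next
    fix u assume "u \<in> \<phi> ` below_repeated w"
    then obtain t i j where t: "t \<in> below_repeated w" "u = \<phi> t"
      and ij: "i < j" "j < length w" "w ! i = w ! j" "t < w ! i"
      unfolding below_repeated_def by blast
    then have "i < j" "j < length (map \<phi> w)" "map \<phi> w ! i = map \<phi> w ! j" "u < map \<phi> w ! i"
      using strict_mono_onD[OF mono] below inS by auto
    then show "u \<in> below_repeated (map \<phi> w) \<inter> \<phi> ` S"
      unfolding below_repeated_def using t below by blast
  qed
  moreover have "set (map \<phi> w) \<inter> \<phi> ` S = \<phi> ` set w" using w by auto
  ultimately show ?thesis unfolding forbidden_values_def by (simp add: Int_Un_distrib2 image_Un)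
qed

lemma card_words_relabel:
  assumes bij: "bij_betw \<phi> S A"
  shows "card {b. length b = L \<and> set b \<subseteq> A \<and> P b} = card {w. length w = L \<and> set w \<subseteq> S \<and> P (map \<phi> w)}"
proof -
  have lists: "map \<phi> ` lists S = lists A" using bij bij_betw_imp_surj_on lists_image by metis
  have "{b. length b = L \<and> set b \<subseteq> A \<and> P b} = map \<phi> ` {w. length w = L \<and> set w \<subseteq> S \<and> P (map \<phi> w)}"
  proof (intro equalityI subsetI)
    fix b assume b: "b \<in> {b. length b = L \<and> set b \<subseteq> A \<and> P b}"
    then have "b \<in> map \<phi> ` lists S" unfolding lists by (auto simp: in_lists_conv_set)
    then obtain w where "set w \<subseteq> S" "b = map \<phi> w" by (auto simp: in_lists_conv_set)
    with b show "b \<in> map \<phi> ` {w. length w = L \<and> set w \<subseteq> S \<and> P (map \<phi> w)}" by auto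
  qed (use lists in \<open>auto simp: in_lists_conv_set\<close>)
  moreover have "inj_on (map \<phi>) {w. length w = L \<and> set w \<subseteq> S \<and> P (map \<phi> w)}"
    by (rule inj_on_subset[OF bij_betw_imp_inj_on[OF bij_lists[OF bij]]]) (auto simp: in_lists_conv_set)
  ultimately show ?thesis by (simp add: card_image)
qed

lemma card_avoiding_words_eq_kcount:
  assumes "finite A"
  shows "card {b. length b = L \<and> set b \<subseteq> A \<and> avoids_010_110 b} = kcount L (card A)"
proof -
  obtain \<phi> where bij: "bij_betw \<phi> {..<card A} A" and mono: "strict_mono_on {..<card A} \<phi>"
    using ex_bij_betw_strict_mono_card[OF assms] by blast
  show ?thesis
    unfolding card_words_relabel[OF bij] kcount_def atLeast0LessThan
    by (simp add: avoids_010_110_map_strict_mono[OF mono] cong: conj_cong)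
qed

lemma card_avoiding_words_eq_jcount:
  assumes "finite A"
  shows "card {b. length b = L \<and> set b \<subseteq> A \<and> avoids_010_110 b \<and> card (forbidden_values b \<inter> A) = c}
    = jcount L (card A) c"
proof -
  obtain \<phi> where bij: "bij_betw \<phi> {..<card A} A" and mono: "strict_mono_on {..<card A} \<phi>"
    using ex_bij_betw_strict_mono_card[OF assms] by blast
  have "card (forbidden_values (map \<phi> w) \<inter> A) = forb w"
    if "set w \<subseteq> {..<card A}" "avoids_010_110 w" for w
  proof -
    have "forbidden_values w \<subseteq> {..<card A}" "below_repeated w \<subseteq> {..<card A}"
      using forbidden_values_subset_lessThan[OF that(1)] unfolding forbidden_values_def by auto
    then show ?thesis
      using forbidden_values_map_strict_mono[OF mono that(1)] bij_betw_imp_surj_on[OF bij]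
        card_image[OF inj_on_subset[OF strict_mono_on_imp_inj_on[OF mono]]]
        forb_eq_card_forbidden_values[OF that(2)]
      by metis
  qed
  then show ?thesis
    unfolding card_words_relabel[OF bij] jcount_def atLeast0LessThan
    by (simp add: avoids_010_110_map_strict_mono[OF mono] cong: conj_cong)
qed

lemma avoids_010_110_append_replicate_max:
  assumes a: "avoids_010_110 s" and le: "\<forall>v\<in>set s. v \<le> M"
  shows "avoids_010_110 (s @ replicate k M)"
proof (rule avoids_010_110I)
  fix i j l let ?t = "s @ replicate k M"
  assume h: "i < j" "j < l" "l < length ?t" "?t ! l < ?t ! j"
  moreover have "?t ! j \<le> M" using h le by (auto simp: nth_append)
  ultimately have "l < length s" by (auto simp: nth_append split: if_splits)
  then show "?t ! i \<noteq> ?t ! l \<and> ?t ! i \<noteq> ?t ! j"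
    using h avoids_010_110D_010[OF a, of i j l] avoids_010_110D_110[OF a, of i j l] by (auto simp: nth_append)
qed

lemma avoids_010_110_after_repeated_max:
  assumes a: "avoids_010_110 (x @ M # y @ M # z)" and v: "v \<in> set z"
  shows "M \<le> v"
proof (rule ccontr)
  assume "\<not> M \<le> v"
  moreover obtain k where "k < length z" "z ! k = v" using v by (auto simp: in_set_conv_nth)
  ultimately show False
    using avoids_010_110D_110[OF a, of "length x" "length x + Suc (length y)" "length x + Suc (length y) + Suc k"]
    by (simp add: nth_append)
qed

lemma forbidden_values_repeated_max:
  assumes le: "\<forall>v\<in>set (x @ M # y @ M # z). v \<le> M"
  shows "forbidden_values (x @ M # y @ M # z) = {..M}"
proof
  let ?s = "x @ M # y @ M # z"
  have "Max (set ?s) = M" using le by (intro Max_eqI) auto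
  then show "forbidden_values ?s \<subseteq> {..M}" using forbidden_values_subset_atMost_Max[of ?s] by simp
  have "v \<in> below_repeated ?s" if "v < M" for v
    unfolding below_repeated_def
    by (rule CollectI exI[of _ "length x"] exI[of _ "length x + Suc (length y)"])+ (use that in \<open>simp add: nth_append\<close>)
  then show "{..M} \<subseteq> forbidden_values ?s" unfolding forbidden_values_def by (auto simp: le_less)
qed

lemma forb_repeated_max:
  assumes "avoids_010_110 (x @ M # y @ M # z)" and "\<forall>v\<in>set (x @ M # y @ M # z). v \<le> M"
  shows "forb (x @ M # y @ M # z) = M + 1"
  using assms by (simp add: forb_eq_card_forbidden_values forbidden_values_repeated_max)

lemma avoids_010_110_append_max_iff:
  assumes a: "avoids_010_110 a" and am: "\<forall>v\<in>set a. v < m" and bm: "\<forall>v\<in>set b. v < m"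
  shows "avoids_010_110 (a @ m # b) \<longleftrightarrow> avoids_010_110 b \<and> set b \<inter> forbidden_values a = {}"
proof
  assume h: "avoids_010_110 (a @ m # b)"
  have disj: "set a \<inter> set b = {}"
  proof (rule ccontr)
    assume "set a \<inter> set b \<noteq> {}"
    then obtain v where v: "v \<in> set a" "v \<in> set b" by blast
    then have "v < m" using bm by blast
    obtain i l where "i < length a" "l < length b" "a ! i = v" "b ! l = v"
      using v by (auto simp: in_set_conv_nth)
    with \<open>v < m\<close> show False
      using avoids_010_110D_010[OF h, of i "length a" "length a + Suc l"] by (simp add: nth_append)
  qed
  then have "set a \<inter> set (m # b) = {}" using am by auto
  then have "avoids_010_110 (m # b)" "set (m # b) \<inter> below_repeated a = {}"
    using avoids_010_110_append_disjoint h by auto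
  then show "avoids_010_110 b \<and> set b \<inter> forbidden_values a = {}"
    using avoids_010_110_appendD2[of "[m]" b] disj unfolding forbidden_values_def by auto
next
  assume h: "avoids_010_110 b \<and> set b \<inter> forbidden_values a = {}"
  have "avoids_010_110 ([m] @ b)"
    using avoids_010_110_append_disjoint[of "[m]" b] bm avoids_010_110_singleton below_repeated_singleton h
    by auto
  moreover have "set a \<inter> set (m # b) = {}" "set (m # b) \<inter> below_repeated a = {}"
    using h am below_repeated_subset_lessThan[OF am] unfolding forbidden_values_def by auto
  ultimately show "avoids_010_110 (a @ m # b)" using avoids_010_110_append_disjoint a by auto
qed

lemma forb_append_max:
  assumes a: "avoids_010_110 a" and am: "\<forall>v\<in>set a. v < m"
    and b: "avoids_010_110 b" "set b \<subseteq> {..<m} - forbidden_values a"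
  shows "forb (a @ m # b) = forb a + 1 + card (forbidden_values b \<inter> ({..<m} - forbidden_values a))"
proof -
  have bm: "\<forall>v\<in>set b. v < m" using b by auto
  have Fa: "forbidden_values a \<subseteq> {..<m}" and Fb: "forbidden_values b \<subseteq> {..<m}"
    using forbidden_values_subset_lessThan am bm by auto
  have disj: "set a \<inter> set b = {}" and "m \<notin> set a" "m \<notin> set b"
    using b am bm unfolding forbidden_values_def by auto
  then have "below_repeated (a @ m # b) = below_repeated a \<union> below_repeated b"
    using below_repeated_append_disjoint[of a "m # b"] below_repeated_append_disjoint[of "[m]" b]
      below_repeated_singleton by auto
  define C where "C = forbidden_values b \<inter> ({..<m} - forbidden_values a)"
  have "forbidden_values (a @ m # b) = forbidden_values a \<union> insert m C"
    using \<open>below_repeated (a @ m # b) = _\<close> Fb unfolding forbidden_values_def C_def by auto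
  moreover have "card (forbidden_values a \<union> insert m C) = card (forbidden_values a) + card (insert m C)"
    using Fa finite_subset[OF Fa] unfolding C_def by (intro card_Un_disjoint) auto
  moreover have "card (insert m C) = card C + 1" unfolding C_def by simp
  moreover have "avoids_010_110 (a @ m # b)" using avoids_010_110_append_max_iff[OF a am bm] b by auto
  ultimately show ?thesis unfolding C_def by (simp add: forb_eq_card_forbidden_values a)
qed

lemma card_max_suffixes_below_max:
  assumes a: "avoids_010_110 a" and am: "\<forall>v\<in>set a. v < m" and f: "forb a < f"
  shows "card {b. length b = L \<and> set b \<subseteq> {..<m} \<and> avoids_010_110 (a @ m # b) \<and> forb (a @ m # b) = f}
    = jcount L (m - forb a) (f - forb a - 1)"
proof -
  define A where "A = {..<m} - forbidden_values a"
  have "forbidden_values a \<subseteq> {..<m}" using forbidden_values_subset_lessThan am by auto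
  then have "card A = m - forb a"
    unfolding A_def by (simp add: forb_eq_card_forbidden_values[OF a] card_Diff_subset finite_subset)
  moreover have "set b \<subseteq> {..<m} \<and> avoids_010_110 (a @ m # b) \<and> forb (a @ m # b) = f \<longleftrightarrow>
      set b \<subseteq> A \<and> avoids_010_110 b \<and> card (forbidden_values b \<inter> A) = f - forb a - 1" for b
  proof (cases "set b \<subseteq> {..<m}")
    case True
    then have "avoids_010_110 (a @ m # b) \<longleftrightarrow> avoids_010_110 b \<and> set b \<subseteq> A"
      using avoids_010_110_append_max_iff[OF a am, of b] unfolding A_def by auto
    then show ?thesis using forb_append_max[OF a am, of b] f True unfolding A_def by auto
  qed (auto simp: A_def)
  ultimately show ?thesis
    using card_avoiding_words_eq_jcount[of A L "f - forb a - 1"] unfolding A_def by simp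
qed

text \<open>Once \<open>m\<close> occurs twice, 110 forces every later letter to be \<open>m\<close>.\<close>

lemma avoids_010_110_append_max_with_max_iff:
  assumes a: "avoids_010_110 a" and am: "\<forall>v\<in>set a. v < m" and bm: "set b \<subseteq> {..m}"
  shows "m \<in> set b \<and> avoids_010_110 (a @ m # b) \<longleftrightarrow>
    (\<exists>c k. b = c @ m # replicate k m \<and> avoids_010_110 c \<and> set c \<subseteq> {..<m} - forbidden_values a)"
proof
  assume h: "m \<in> set b \<and> avoids_010_110 (a @ m # b)"
  then obtain c d where b: "b = c @ m # d" and "m \<notin> set c" using split_list_first by metis
  then have cm: "\<forall>v\<in>set c. v < m" using bm by (auto simp: subset_iff nat_less_le)
  have "avoids_010_110 (a @ m # c @ m # d)" using h b by simp
  then have "m \<le> v" if "v \<in> set d" for v using that by (rule avoids_010_110_after_repeated_max)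
  moreover have "v \<le> m" if "v \<in> set d" for v using that bm b by auto
  ultimately have "d = replicate (length d) m" by (simp add: replicate_length_same order_antisym)
  moreover have "avoids_010_110 (a @ m # c)"
    using avoids_010_110_appendD1[of "a @ m # c" "m # d"] h b by simp
  ultimately show "\<exists>c k. b = c @ m # replicate k m \<and> avoids_010_110 c \<and> set c \<subseteq> {..<m} - forbidden_values a"
    using b avoids_010_110_append_max_iff[OF a am cm] cm by auto
next
  assume "\<exists>c k. b = c @ m # replicate k m \<and> avoids_010_110 c \<and> set c \<subseteq> {..<m} - forbidden_values a"
  then obtain c k where b: "b = c @ m # replicate k m" and c: "avoids_010_110 c" "set c \<subseteq> {..<m} - forbidden_values a"
    by blast
  then have "avoids_010_110 ((a @ m # c) @ replicate (Suc k) m)"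
    using avoids_010_110_append_max_iff[OF a am] am
    by (intro avoids_010_110_append_replicate_max) auto
  then show "m \<in> set b \<and> avoids_010_110 (a @ m # b)" using b by simp
qed

lemma max_suffixes_with_max_eq_image:
  assumes a: "avoids_010_110 a" and am: "\<forall>v\<in>set a. v < m"
  shows "{b. length b = L \<and> set b \<subseteq> {..m} \<and> m \<in> set b \<and> avoids_010_110 (a @ m # b) \<and> forb (a @ m # b) = f}
    = (if f = m + 1 then (\<lambda>c. c @ m # replicate (L - Suc (length c)) m) `
        {c. length c < L \<and> set c \<subseteq> {..<m} - forbidden_values a \<and> avoids_010_110 c} else {})"
    (is "?S = (if _ then ?g ` ?C else {})")
proof -
  have forb_repeated: "forb (a @ m # c @ m # replicate k m) = m + 1"
    if "avoids_010_110 (a @ m # c @ m # replicate k m)" "set c \<subseteq> {..<m}" for c k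
  proof -
    have "\<forall>v\<in>set (a @ m # c @ m # replicate k m). v \<le> m" using am that(2) by auto
    then show ?thesis using forb_repeated_max[OF that(1)] by simp
  qed
  have sub: "?S \<subseteq> (if f = m + 1 then ?g ` ?C else {})"
  proof
    fix b assume "b \<in> ?S"
    then have b: "length b = L" "set b \<subseteq> {..m}" "m \<in> set b \<and> avoids_010_110 (a @ m # b)" "forb (a @ m # b) = f"
      by auto
    then obtain c k where c: "b = c @ m # replicate k m" "avoids_010_110 c" "set c \<subseteq> {..<m} - forbidden_values a"
      using avoids_010_110_append_max_with_max_iff[OF a am b(2)] by blast
    have "length c < L" and "k = L - Suc (length c)" using b(1) c(1) by auto
    then have "b = ?g c" and "c \<in> ?C" using c by auto
    moreover have "f = m + 1" using forb_repeated[of c k] b c by auto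
    ultimately show "b \<in> (if f = m + 1 then ?g ` ?C else {})" by auto
  qed
  have mem: "?g c \<in> ?S" if f: "f = m + 1" and "c \<in> ?C" for c
  proof -
    have c: "length c < L" "set c \<subseteq> {..<m} - forbidden_values a" "avoids_010_110 c" using \<open>c \<in> ?C\<close> by auto
    let ?b = "?g c"
    have bm: "set ?b \<subseteq> {..m}" using c by auto
    then have "m \<in> set ?b \<and> avoids_010_110 (a @ m # ?b)"
      using avoids_010_110_append_max_with_max_iff[OF a am bm] c by blast
    moreover have "forb (a @ m # ?b) = m + 1" using forb_repeated calculation c by auto
    ultimately show "?b \<in> ?S" using bm c f by simp
  qed
  show ?thesis
  proof (cases "f = m + 1")
    case True
    then have "?g ` ?C \<subseteq> ?S" using mem by blast
    moreover have "?S \<subseteq> ?g ` ?C" using sub True by simp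
    ultimately have "?S = ?g ` ?C" by (rule subset_antisym[rotated])
    then show ?thesis using True by simp
  qed (use sub in \<open>simp only: if_False subset_empty\<close>)
qed

lemma card_Collect_length_less:
  assumes "\<And>q. finite {c. length c = q \<and> P c}"
  shows "card {c. length c < L \<and> P c} = (\<Sum>q<L. card {c. length c = q \<and> P c})"
proof -
  have "{c. length c < L \<and> P c} = (\<Union>q<L. {c. length c = q \<and> P c})" by auto
  then show ?thesis using assms by (simp add: card_UN_disjoint disjoint_iff)
qed

lemma card_max_suffixes_with_max:
  assumes a: "avoids_010_110 a" and am: "\<forall>v\<in>set a. v < m"
  shows "card {b. length b = L \<and> set b \<subseteq> {..m} \<and> m \<in> set b \<and> avoids_010_110 (a @ m # b) \<and> forb (a @ m # b) = f}
    = (if f = m + 1 then \<Sum>q<L. kcount q (m - forb a) else 0)"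
proof -
  define A where "A = {..<m} - forbidden_values a"
  have "forbidden_values a \<subseteq> {..<m}" using forbidden_values_subset_lessThan am by auto
  then have cardA: "card A = m - forb a"
    unfolding A_def by (simp add: forb_eq_card_forbidden_values[OF a] card_Diff_subset finite_subset)
  have finA: "finite A" unfolding A_def by simp
  let ?g = "\<lambda>c. c @ m # replicate (L - Suc (length c)) m"
  have "inj_on ?g {c. set c \<subseteq> A}"
  proof (rule inj_onI)
    fix c c' assume "c \<in> {c. set c \<subseteq> A}" "c' \<in> {c. set c \<subseteq> A}" and eq: "?g c = ?g c'"
    then have "m \<notin> set c" "m \<notin> set c'" unfolding A_def by auto
    from this eq show "c = c'" by (rule conjunct1[OF append_Cons_eq_append_Cons_first])
  qed
  then have "card (?g ` {c. length c < L \<and> set c \<subseteq> A \<and> avoids_010_110 c})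
      = card {c. length c < L \<and> set c \<subseteq> A \<and> avoids_010_110 c}"
    by (auto intro: card_image inj_on_subset)
  also have "\<dots> = (\<Sum>q<L. kcount q (m - forb a))"
  proof (subst card_Collect_length_less)
    show "finite {c. length c = q \<and> set c \<subseteq> A \<and> avoids_010_110 c}" for q
      by (rule finite_subset[OF _ finite_lists_length_eq[OF finA, of q]]) auto
  qed (simp add: card_avoiding_words_eq_kcount[OF finA] cardA)
  finally show ?thesis
    unfolding max_suffixes_with_max_eq_image[OF a am] A_def by (cases "f = m + 1") simp_all
qed

lemma card_max_suffixes:
  assumes a: "avoids_010_110 a" and am: "\<forall>v\<in>set a. v < m" and f: "forb a < f"
  shows "card {b. length b = L \<and> set b \<subseteq> {..m} \<and> avoids_010_110 (a @ m # b) \<and> forb (a @ m # b) = f}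
    = jcount L (m - forb a) (f - forb a - 1) + (if f = m + 1 then 1 else 0) * (\<Sum>q<L. kcount q (m - forb a))"
proof -
  define X where "X = {b. length b = L \<and> set b \<subseteq> {..<m} \<and> avoids_010_110 (a @ m # b) \<and> forb (a @ m # b) = f}"
  define Y where "Y = {b. length b = L \<and> set b \<subseteq> {..m} \<and> m \<in> set b \<and> avoids_010_110 (a @ m # b) \<and> forb (a @ m # b) = f}"
  have split: "{b. length b = L \<and> set b \<subseteq> {..m} \<and> avoids_010_110 (a @ m # b) \<and> forb (a @ m # b) = f} = X \<union> Y"
    unfolding X_def Y_def by (auto simp: subset_iff less_le)
  have card_union: "card (X \<union> Y) = card X + card Y"
  proof (rule card_Un_disjoint)
    show "finite X" by (rule finite_subset[OF _ finite_lists_length_eq[of "{..<m}" L]]) (auto simp: X_def)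
    show "finite Y" by (rule finite_subset[OF _ finite_lists_length_eq[of "{..m}" L]]) (auto simp: Y_def)
  qed (auto simp: X_def Y_def)
  have "card X = jcount L (m - forb a) (f - forb a - 1)"
    unfolding X_def by (rule card_max_suffixes_below_max[OF a am f])
  moreover have "card Y = (if f = m + 1 then \<Sum>q<L. kcount q (m - forb a) else 0)"
    unfolding Y_def by (rule card_max_suffixes_with_max[OF a am])
  ultimately show ?thesis unfolding split card_union by simp
qed

lemma is_inv_seq_append_max:
  assumes bm: "\<forall>v\<in>set b. v \<le> m"
  shows "is_inv_seq n (a @ m # b) \<longleftrightarrow>
    is_inv_seq (length a) a \<and> m \<le> length a \<and> n = Suc (length a + length b)"
proof
  assume "is_inv_seq n (a @ m # b)"
  then have len: "n = Suc (length a + length b)" and lt: "\<And>i. i < n \<Longrightarrow> (a @ m # b) ! i < i + 1"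
    unfolding is_inv_seq_def by auto
  have "a ! i < i + 1" if "i < length a" for i using lt[of i] that len by (simp add: nth_append)
  moreover have "m < length a + 1" using lt[of "length a"] len by simp
  ultimately show "is_inv_seq (length a) a \<and> m \<le> length a \<and> n = Suc (length a + length b)"
    unfolding is_inv_seq_def using len by auto
next
  assume h: "is_inv_seq (length a) a \<and> m \<le> length a \<and> n = Suc (length a + length b)"
  have "(a @ m # b) ! i < i + 1" if "i < n" for i
  proof (cases "i \<le> length a")
    case True
    then show ?thesis using h unfolding is_inv_seq_def by (auto simp: nth_append le_less)
  next
    case False
    then have "(a @ m # b) ! i \<in> set b" using that h by (auto simp: nth_append nth_Cons' )
    then show ?thesis using bm h False by fastforce
  qed
  with h show "is_inv_seq n (a @ m # b)" unfolding is_inv_seq_def by simp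
qed

lemma forb_less_forb_append_max:
  assumes s: "avoids_010_110 (a @ m # b)" and am: "\<forall>v\<in>set a. v < m"
  shows "forb a < forb (a @ m # b)"
proof -
  have "forbidden_values a \<subseteq> {..<m}" using forbidden_values_subset_lessThan am by auto
  moreover have "m \<in> forbidden_values (a @ m # b)" unfolding forbidden_values_def by simp
  ultimately have "forbidden_values a \<subset> forbidden_values (a @ m # b)"
    using forbidden_values_append_mono[of a "m # b"] by auto
  moreover have "finite (forbidden_values (a @ m # b))"
    using forbidden_values_subset_atMost_Max[of "a @ m # b"] finite_subset by auto
  ultimately show ?thesis
    using psubset_card_mono avoids_010_110_appendD1[OF s]
    by (simp add: forb_eq_card_forbidden_values s)
qed

lemma inv_seq_split_first_max:
  assumes s: "is_inv_seq n s" "avoids_010_110 s" "s \<noteq> []" "Max (set s) = m" and m: "m \<ge> 1"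
  obtains a b where "s = a @ m # b"
    and "is_inv_seq (length a) a" "avoids_010_110 a" "a \<noteq> []" "Max (set a) < m" "forb a < forb s"
    and "length b = n - (length a + 1)" "set b \<subseteq> {..m}"
    and "m + 1 \<le> length a + 1" "length a + 1 \<le> n"
proof -
  have "m \<in> set s" using s(3,4) Max_in by fastforce
  then obtain a b where split: "s = a @ m # b" and "m \<notin> set a" using split_list_first by metis
  have "\<forall>v\<in>set s. v \<le> m" using s(4) by auto
  then have am: "\<forall>v\<in>set a. v < m" and bm: "\<forall>v\<in>set b. v \<le> m"
    using \<open>m \<notin> set a\<close> split by (auto simp: le_less)
  have inv: "is_inv_seq (length a) a" "m \<le> length a" "n = Suc (length a + length b)"
    using is_inv_seq_append_max[OF bm] s(1) split by auto
  then have "a \<noteq> []" using m by auto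
  moreover have "Max (set a) < m" using am \<open>a \<noteq> []\<close> by simp
  moreover have "avoids_010_110 a" using avoids_010_110_appendD1 s(2) split by blast
  moreover have "forb a < forb s" using forb_less_forb_append_max s(2) am split by blast
  ultimately show thesis using split inv bm by (intro that[of a b]) auto
qed

lemma lcount_split_first_max:
  assumes m: "m \<ge> 1"
  shows "lcount n m f =
    (\<Sum>p = m + 1..n. \<Sum>a \<in> {a. is_inv_seq (p - 1) a \<and> avoids_010_110 a \<and> a \<noteq> [] \<and> Max (set a) < m \<and> forb a < f}.
      card {b. length b = n - p \<and> set b \<subseteq> {..m} \<and> avoids_010_110 (a @ m # b) \<and> forb (a @ m # b) = f})"
proof -
  define Pre where "Pre p = {a. is_inv_seq (p - 1) a \<and> avoids_010_110 a \<and> a \<noteq> [] \<and> Max (set a) < m \<and> forb a < f}" for p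
  define Suf where "Suf p a = {b. length b = n - p \<and> set b \<subseteq> {..m} \<and> avoids_010_110 (a @ m # b) \<and> forb (a @ m # b) = f}"
    for p a
  define S where "S = {s. is_inv_seq n s \<and> avoids_010_110 s \<and> s \<noteq> [] \<and> Max (set s) = m \<and> forb s = f}"
  define T where "T = (SIGMA p:{m + 1..n}. SIGMA a:Pre p. Suf p a)"
  \<comment> \<open>\<open>p\<close> is the 1-based position of the first occurrence of the maximum \<open>m\<close>\<close>
  define join where "join = (\<lambda>(p::nat, a, b). a @ m # b)"
  have below_max: "\<forall>v\<in>set a. v < m" if "a \<in> Pre p" for a p
    using that unfolding Pre_def by auto
  have "join ` T \<subseteq> S"
  proof clarify
    fix p a b assume "(p, a, b) \<in> T"
    then have p: "m + 1 \<le> p" "p \<le> n" and a: "a \<in> Pre p" and b: "b \<in> Suf p a" unfolding T_def by auto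
    have "length a = p - 1" "is_inv_seq (p - 1) a" using a unfolding Pre_def is_inv_seq_def by simp_all
    moreover have "\<forall>v\<in>set b. v \<le> m" "length b = n - p" using b unfolding Suf_def by auto
    ultimately have "is_inv_seq n (a @ m # b)" using is_inv_seq_append_max p by auto
    moreover have "Max (set (a @ m # b)) = m"
      using below_max[OF a] b unfolding Suf_def by (intro Max_eqI) auto
    ultimately show "join (p, a, b) \<in> S" using b unfolding S_def Suf_def join_def by simp
  qed
  moreover have "S \<subseteq> join ` T"
  proof
    fix s assume "s \<in> S"
    then have s: "is_inv_seq n s" "avoids_010_110 s" "s \<noteq> []" "Max (set s) = m" "forb s = f"
      unfolding S_def by auto
    then obtain a b where split: "s = a @ m # b" and a: "is_inv_seq (length a) a" "avoids_010_110 a"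
        "a \<noteq> []" "Max (set a) < m" "forb a < f" and b: "length b = n - (length a + 1)" "set b \<subseteq> {..m}"
      and p: "m + 1 \<le> length a + 1" "length a + 1 \<le> n"
      using inv_seq_split_first_max[OF s(1-4) m] by metis
    then have "(length a + 1, a, b) \<in> T" using s unfolding T_def Pre_def Suf_def by auto
    then show "s \<in> join ` T" unfolding join_def split by force
  qed
  ultimately have image: "join ` T = S" by blast
  have "inj_on join T"
  proof (rule inj_onI)
    fix x y assume "x \<in> T" "y \<in> T" and eq: "join x = join y"
    moreover obtain p a b p' a' b' where xy: "x = (p, a, b)" "y = (p', a', b')" by (cases x, cases y) auto
    ultimately have a: "a \<in> Pre p" "a' \<in> Pre p'" and p: "p \<ge> 1" "p' \<ge> 1" unfolding T_def by auto
    have "m \<notin> set a" "m \<notin> set a'" using below_max[OF a(1)] below_max[OF a(2)] by blast+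
    moreover have "a @ m # b = a' @ m # b'" using eq unfolding join_def xy by simp
    ultimately have "a = a' \<and> b = b'" by (rule append_Cons_eq_append_Cons_first)
    moreover have "length a = p - 1" "length a' = p' - 1" using a unfolding Pre_def is_inv_seq_def by auto
    ultimately show "x = y" using p xy by simp
  qed
  moreover have "finite (Pre p)" for p
    by (rule finite_subset[OF _ finite_is_inv_seq[of "p - 1"]]) (auto simp: Pre_def)
  moreover have "finite (Suf p a)" for p a
    by (rule finite_subset[OF _ finite_lists_length_eq[of "{..m}" "n - p"]]) (auto simp: Suf_def)
  ultimately have "card S = (\<Sum>p = m + 1..n. \<Sum>a\<in>Pre p. card (Suf p a))"
    unfolding image[symmetric] T_def by (simp add: card_image)
  then show ?thesis unfolding lcount_def S_def Pre_def Suf_def .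
qed

theorem mainTheorem13:
  fixes n m f :: nat
  assumes "n \<ge> 1" and "m \<ge> 1"
  shows "lcount n m f =
    (\<Sum>p = m + 1..n. \<Sum>i < f. \<Sum>j < m.
       lcount (p - 1) j i *
       (jcount (n - p) (m - i) (f - i - 1) +
        (if f = m + 1 then 1 else 0) * (\<Sum>q < n - p. kcount q (m - i))))"
proof -
  define Pre where "Pre p = {a. is_inv_seq (p - 1) a \<and> avoids_010_110 a \<and> a \<noteq> [] \<and> Max (set a) < m \<and> forb a < f}" for p
  define G where "G p i = jcount (n - p) (m - i) (f - i - 1) +
    (if f = m + 1 then 1 else 0) * (\<Sum>q < n - p. kcount q (m - i))" for p i
  have "lcount n m f = (\<Sum>p = m + 1..n. \<Sum>a\<in>Pre p. G p (forb a))"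
    unfolding lcount_split_first_max[OF assms(2)] Pre_def G_def
    by (intro sum.cong refl card_max_suffixes) auto
  also have "\<dots> = (\<Sum>p = m + 1..n. \<Sum>i<f. \<Sum>j<m. card {a\<in>Pre p. forb a = i \<and> Max (set a) = j} * G p i)"
  proof (intro sum.cong refl)
    fix p
    have "finite (Pre p)" by (rule finite_subset[OF _ finite_is_inv_seq[of "p - 1"]]) (auto simp: Pre_def)
    moreover have "forb a < f \<and> Max (set a) < m" if "a \<in> Pre p" for a using that unfolding Pre_def by auto
    ultimately show "(\<Sum>a\<in>Pre p. G p (forb a)) = (\<Sum>i<f. \<Sum>j<m. card {a\<in>Pre p. forb a = i \<and> Max (set a) = j} * G p i)"
      using sum_group_by_pair[of "Pre p" forb f "\<lambda>a. Max (set a)" m "\<lambda>i j. G p i"] by simp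
  qed
  also have "\<dots> = (\<Sum>p = m + 1..n. \<Sum>i<f. \<Sum>j<m. lcount (p - 1) j i * G p i)"
    unfolding lcount_def Pre_def by (intro sum.cong refl arg_cong2[where f = "(*)"] arg_cong[where f = card]) auto
  finally show ?thesis unfolding G_def .
qed

end
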